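(* For any graph $G$ and integers $k\ge 2$, $r\ge 3$, let $\mathcal{G}=\bigcup_{v\in V(G)}\mathcal{G}^*(v)$. Then $R_r(\mathcal{B}(G),k)\le R(\mathcal{G},k)+r-2$.
   Context: For a graph $G$, a hypergraph $H$ is a Berge-$G$ hypergraph if there are an injective map $\phi:V(G)\to V(H)$ and pairwise distinct hyperedges $e_{xy}\in E(H)$, one for each $xy\in E(G)$, with $\phi(x),\phi(y)\in e_{xy}$. $\mathcal{B}(G)$ denotes the family of all Berge-$G$ hypergraphs. For a family $\mathcal{H}$ of $r$-uniform hypergraphs, $R_r(\mathcal{H},k)$ is the smallest $n$ such that every $k$-coloring of the hyperedges of the complete $r$-uniform hypergraph $K_n^r$ contains a monochromatic subhypergraph belonging to $\mathcal{H}$. For a family $\mathcal{G}$ of graphs, $R(\mathcal{G},k)$ is the smallest $n$ such that every $k$-coloring of the edges of $K_n$ contains a monochromatic subgraph isomorphic to some member of $\mathcal{G}$. For a graph $G$ and $v\in V(G)$ with neighborhood $N(v)=\{q_1,\dots,q_t\}$, let $G'=G-v$. An extension of $G-v$ is any graph obtained from $G'$ by adding, for each $i=1,\dots,t$, an edge $q_ir_i$ not belonging to $G'$, where each $r_i$ is either a vertex of $G'$ or a new vertex not in $G'$ (new vertices may be shared by several $r_i$), and the $t$ added edges are pairwise distinct. $\mathcal{G}^*(v)$ denotes the family of all such extensions. *)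

theory Defs
  imports Main
begin

definition simple_graph :: "'a set \<Rightarrow> 'a set set \<Rightarrow> bool" where
  "simple_graph V E \<longleftrightarrow> finite V \<and> (\<forall>e\<in>E. e \<subseteq> V \<and> card e = 2)"

definition nbhd :: "'a set set \<Rightarrow> 'a \<Rightarrow> 'a set" where
  "nbhd E v = {q. {v, q} \<in> E}"

text \<open>Vertices of an extension live in type 'a + nat:
  the old vertices of G - v are Inl x, new vertices are Inr j.\<close>
definition extensions :: "'a set \<Rightarrow> 'a set set \<Rightarrow> 'a \<Rightarrow> (('a + nat) set \<times> ('a + nat) set set) set" where
  "extensions V E v =
    {(Inl ` (V - {v}) \<union> rho ` nbhd E v,
      ((`) Inl) ` {e\<in>E. v \<notin> e} \<union> (\<lambda>q. {Inl q, rho q}) ` nbhd E v) | rho.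
       (\<forall>q\<in>nbhd E v. (rho q \<in> Inl ` (V - {v}) \<or> rho q \<in> range Inr)
                      \<and> rho q \<noteq> Inl q
                      \<and> {Inl q, rho q} \<notin> ((`) Inl) ` {e\<in>E. v \<notin> e})
       \<and> inj_on (\<lambda>q. {Inl q, rho q}) (nbhd E v)}"

definition graph_arrows :: "nat \<Rightarrow> nat \<Rightarrow> ('b set \<times> 'b set set) set \<Rightarrow> bool" where
  "graph_arrows n k Gs \<longleftrightarrow>
    (\<forall>c :: nat set \<Rightarrow> nat. (\<forall>e. e \<subseteq> {..<n} \<and> card e = 2 \<longrightarrow> c e < k) \<longrightarrow>
      (\<exists>H\<in>Gs. \<exists>i f. inj_on f (fst H) \<and> f ` fst H \<subseteq> {..<n} \<and>
                    (\<forall>e\<in>snd H. c (f ` e) = i)))"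

definition graph_ramsey :: "nat \<Rightarrow> ('b set \<times> 'b set set) set \<Rightarrow> nat" where
  "graph_ramsey k Gs = (LEAST n. graph_arrows n k Gs)"

definition berge_arrows :: "nat \<Rightarrow> nat \<Rightarrow> nat \<Rightarrow> 'a set \<Rightarrow> 'a set set \<Rightarrow> bool" where
  "berge_arrows r n k V E \<longleftrightarrow>
    (\<forall>c :: nat set \<Rightarrow> nat. (\<forall>e. e \<subseteq> {..<n} \<and> card e = r \<longrightarrow> c e < k) \<longrightarrow>
      (\<exists>i phi h. inj_on phi V \<and> phi ` V \<subseteq> {..<n} \<and> inj_on h E \<and>
         (\<forall>xy\<in>E. h xy \<subseteq> {..<n} \<and> card (h xy) = r \<and> c (h xy) = i \<and> phi ` xy \<subseteq> h xy)))"

definition berge_ramsey :: "nat \<Rightarrow> nat \<Rightarrow> 'a set \<Rightarrow> 'a set set \<Rightarrow> nat" where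
  "berge_ramsey r k V E = (LEAST n. berge_arrows r n k V E)"

end

theory Submission
  imports Defs "HOL-Library.Ramsey"
begin

text \<open>Fix a set \<open>T\<close> of \<open>r - 2\<close> extra vertices and colour each pair \<open>e\<close> of the first \<open>N\<close>
  vertices by the colour of the \<open>r\<close>-set \<open>e \<union> T\<close>.  A monochromatic copy of an extension of
  \<open>G - v\<close> then yields a monochromatic Berge-\<open>G\<close>: \<open>v\<close> is placed in \<open>T\<close>, an edge of \<open>G - v\<close>
  is sent to its own image padded by \<open>T\<close>, and an edge \<open>vq\<close> to the padded image of the added
  edge \<open>q r\<^sub>q\<close>.  Since \<open>T\<close> lies in every hyperedge, \<open>v\<close> is covered, and the added edges being
  distinct and not in \<open>G - v\<close> makes the hyperedges pairwise distinct.\<close>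

lemma extensionsE:
  assumes "H \<in> extensions V E v"
  obtains rho where
    "H = (Inl ` (V - {v}) \<union> rho ` nbhd E v,
      ((`) Inl) ` {e\<in>E. v \<notin> e} \<union> (\<lambda>q. {Inl q, rho q}) ` nbhd E v)"
    "\<forall>q\<in>nbhd E v. (rho q \<in> Inl ` (V - {v}) \<or> rho q \<in> range Inr)
                      \<and> rho q \<noteq> Inl q
                      \<and> {Inl q, rho q} \<notin> ((`) Inl) ` {e\<in>E. v \<notin> e}"
    "inj_on (\<lambda>q. {Inl q, rho q}) (nbhd E v)"
  using assms unfolding extensions_def by blast

lemma edge_through_vertex:
  assumes "simple_graph V E" "e \<in> E" "v \<in> e"
  obtains q where "q \<noteq> v" "e = {v, q}" "q \<in> nbhd E v"
proof -
  have "card e = 2" using assms(1,2) unfolding simple_graph_def by blast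
  then obtain a b where "e = {a, b}" "a \<noteq> b" by (meson card_2_iff)
  then have "e = {v, if a = v then b else a}" "(if a = v then b else a) \<noteq> v"
    using assms(3) by auto
  then obtain q where "q \<noteq> v" "e = {v, q}" by blast
  with assms(2) show thesis by (intro that) (auto simp: nbhd_def)
qed

lemma nbhd_subset:
  assumes "simple_graph V E" "v \<in> V"
  shows "nbhd E v \<subseteq> V - {v}"
proof
  fix q assume "q \<in> nbhd E v"
  hence "{v, q} \<in> E" by (simp add: nbhd_def)
  hence "{v, q} \<subseteq> V" "card {v, q} = 2" using assms(1) unfolding simple_graph_def by auto
  thus "q \<in> V - {v}" by (cases "q = v") auto
qed

lemma finite_nbhd:
  assumes "simple_graph V E" "v \<in> V"
  shows "finite (nbhd E v)"
  using nbhd_subset[OF assms] assms(1) unfolding simple_graph_def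
  by (meson finite_Diff finite_subset)

lemma extensions_nonempty:
  assumes "simple_graph V E" "v \<in> V"
  shows "extensions V E v \<noteq> {}"
proof -
  obtain g :: "'a \<Rightarrow> nat" where g: "inj_on g (nbhd E v)"
    using finite_imp_inj_to_nat_seg[OF finite_nbhd[OF assms]] by blast
  define rho where "rho q = (Inr (g q) :: 'a + nat)" for q
  have "inj_on (\<lambda>q. {Inl q, rho q}) (nbhd E v)"
    by (auto simp: inj_on_def rho_def doubleton_eq_iff)
  then have "(Inl ` (V - {v}) \<union> rho ` nbhd E v,
      ((`) Inl) ` {e\<in>E. v \<notin> e} \<union> (\<lambda>q. {Inl q, rho q}) ` nbhd E v) \<in> extensions V E v"
    unfolding extensions_def by (auto simp: rho_def intro!: exI[of _ rho])
  thus ?thesis by blast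
qed

lemma simple_graph_extension:
  assumes "simple_graph V E" "v \<in> V" "H \<in> extensions V E v"
  shows "simple_graph (fst H) (snd H)"
proof -
  obtain rho where H: "H = (Inl ` (V - {v}) \<union> rho ` nbhd E v,
      ((`) Inl) ` {e\<in>E. v \<notin> e} \<union> (\<lambda>q. {Inl q, rho q}) ` nbhd E v)"
    and rho: "\<forall>q\<in>nbhd E v. rho q \<noteq> Inl q"
    by (rule extensionsE[OF assms(3)]) blast
  have nb: "nbhd E v \<subseteq> V - {v}" using nbhd_subset[OF assms(1,2)] .
  have "finite (fst H)"
    using H finite_nbhd[OF assms(1,2)] assms(1) by (simp add: simple_graph_def)
  moreover have "e \<subseteq> fst H \<and> card e = 2" if e: "e \<in> snd H" for e
  proof -
    consider (old) e' where "e = Inl ` e'" "e' \<in> E" "v \<notin> e'"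
      | (added) q where "e = {Inl q, rho q}" "q \<in> nbhd E v"
      using e H by (auto simp del: image_iff)
    then show ?thesis
    proof cases
      case old
      then have "e' \<subseteq> V" "card e' = 2" using assms(1) unfolding simple_graph_def by auto
      with old H show ?thesis by (auto simp: card_image)
    next
      case added
      with H nb rho show ?thesis by auto
    qed
  qed
  ultimately show ?thesis unfolding simple_graph_def by blast
qed

lemma extension_edge_map:
  assumes "simple_graph V E" "H \<in> extensions V E v"
  obtains g where "inj_on g E" "g ` E \<subseteq> snd H" "\<forall>xy\<in>E. Inl ` (xy - {v}) \<subseteq> g xy"
proof -
  obtain rho where H: "H = (Inl ` (V - {v}) \<union> rho ` nbhd E v,
      ((`) Inl) ` {e\<in>E. v \<notin> e} \<union> (\<lambda>q. {Inl q, rho q}) ` nbhd E v)"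
    and new: "\<forall>q\<in>nbhd E v. {Inl q, rho q} \<notin> ((`) Inl) ` {e\<in>E. v \<notin> e}"
    and rinj: "inj_on (\<lambda>q. {Inl q, rho q}) (nbhd E v)"
    by (rule extensionsE[OF assms(2)]) blast
  define g where
    "g e = (if v \<in> e then {Inl (the_elem (e - {v})), rho (the_elem (e - {v}))} else Inl ` e)" for e
  have g_at_v: "g {v, q} = {Inl q, rho q}" if "q \<noteq> v" for q
  proof -
    have "{v, q} - {v} = {q}" using that by auto
    then show ?thesis by (simp add: g_def)
  qed
  have g_off_v: "g e = Inl ` e" if "v \<notin> e" for e
    using that by (simp add: g_def)
  have "inj_on g E"
  proof (rule inj_onI)
    fix x y assume xy: "x \<in> E" "y \<in> E" "g x = g y"
    show "x = y"
    proof (cases "v \<in> x"; cases "v \<in> y")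
      assume "v \<in> x" "v \<in> y"
      then obtain p q where "p \<noteq> v" "x = {v, p}" "p \<in> nbhd E v" "q \<noteq> v" "y = {v, q}" "q \<in> nbhd E v"
        using edge_through_vertex[OF assms(1)] xy(1,2) by metis
      with xy(3) g_at_v rinj show ?thesis by (auto dest: inj_onD)
    next
      assume "v \<in> x" "v \<notin> y"
      then obtain p where "p \<noteq> v" "x = {v, p}" "p \<in> nbhd E v"
        using edge_through_vertex[OF assms(1) xy(1)] by blast
      with xy(3) g_at_v g_off_v \<open>v \<notin> y\<close> have "{Inl p, rho p} = Inl ` y" by simp
      with new xy(2) \<open>v \<notin> y\<close> \<open>p \<in> nbhd E v\<close> show ?thesis by blast
    next
      assume "v \<notin> x" "v \<in> y"
      then obtain q where "q \<noteq> v" "y = {v, q}" "q \<in> nbhd E v"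
        using edge_through_vertex[OF assms(1) xy(2)] by blast
      with xy(3) g_at_v g_off_v \<open>v \<notin> x\<close> have "{Inl q, rho q} = Inl ` x" by simp
      with new xy(1) \<open>v \<notin> x\<close> \<open>q \<in> nbhd E v\<close> show ?thesis by blast
    next
      assume "v \<notin> x" "v \<notin> y"
      with xy(3) g_off_v show ?thesis by (simp add: inj_image_eq_iff)
    qed
  qed
  moreover have "g e \<in> snd H \<and> Inl ` (e - {v}) \<subseteq> g e" if e: "e \<in> E" for e
  proof (cases "v \<in> e")
    case True
    then obtain q where "q \<noteq> v" "e = {v, q}" "q \<in> nbhd E v"
      using edge_through_vertex[OF assms(1) e] by blast
    with H g_at_v show ?thesis by auto
  next
    case False
    with e H g_off_v show ?thesis by auto
  qed
  ultimately show thesis by (intro that) auto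
qed

lemma card_Un_padding:
  fixes N p :: nat
  assumes "e \<subseteq> {..<N}" "finite e"
  shows "card (e \<union> {N..<N + p}) = card e + p"
  using assms by (subst card_Un_disjoint) auto

lemma inj_on_Un_padding: "inj_on (\<lambda>e. e \<union> {N..<N + p}) (Pow {..<N :: nat})"
proof (rule inj_onI)
  fix x y assume "x \<in> Pow {..<N}" "y \<in> Pow {..<N}" "x \<union> {N..<N + p} = y \<union> {N..<N + p}"
  then have "x \<inter> {N..<N + p} = {}" "y \<inter> {N..<N + p} = {}" by auto
  then have "x = (x \<union> {N..<N + p}) - {N..<N + p}" "y = (y \<union> {N..<N + p}) - {N..<N + p}"
    by blast+
  with \<open>x \<union> {N..<N + p} = y \<union> {N..<N + p}\<close> show "x = y" by simp
qed

text \<open>Ramsey's theorem makes the \<open>LEAST\<close> in \<open>graph_ramsey\<close> well defined; without a witness it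
  would be an arbitrary number.\<close>

lemma graph_arrows_exists:
  assumes "H \<in> Gs" "simple_graph (fst H) (snd H)"
  shows "\<exists>N. graph_arrows N k Gs"
proof -
  obtain N :: nat where N: "partn_lst {..<N} (replicate k (card (fst H))) 2"
    using ramsey_full by blast
  have "graph_arrows N k Gs" unfolding graph_arrows_def
  proof (intro allI impI)
    fix c :: "nat set \<Rightarrow> nat" assume "\<forall>e. e \<subseteq> {..<N} \<and> card e = 2 \<longrightarrow> c e < k"
    then have "c \<in> nsets {..<N} 2 \<rightarrow> {..<k}" by (auto simp: nsets_def)
    then obtain i S where i: "i < k" and S: "S \<in> nsets {..<N} (card (fst H))"
      and mono: "c ` nsets S 2 \<subseteq> {i}"
      using partn_lstE[OF N] by (metis length_replicate nth_replicate)
    have fin: "finite (fst H)" and edges: "\<forall>e\<in>snd H. e \<subseteq> fst H \<and> card e = 2"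
      using assms(2) unfolding simple_graph_def by auto
    from S have S': "finite S" "card (fst H) = card S" "S \<subseteq> {..<N}"
      by (auto simp: nsets_def)
    then obtain b where b: "bij_betw b (fst H) S"
      using finite_same_card_bij[OF fin] by blast
    have "c (b ` e) = i" if "e \<in> snd H" for e
    proof -
      have "e \<subseteq> fst H" "card e = 2" using edges that by auto
      moreover from this(1) fin have "finite e" by (rule finite_subset)
      ultimately have "b ` e \<in> nsets S 2"
        using b by (auto simp: nsets_def card_image bij_betw_def inj_on_subset)
      with mono show ?thesis by blast
    qed
    moreover have "b ` fst H \<subseteq> {..<N}" using b S'(3) by (simp add: bij_betw_def)
    ultimately show "\<exists>H\<in>Gs. \<exists>i f. inj_on f (fst H) \<and> f ` fst H \<subseteq> {..<N} \<and>
        (\<forall>e\<in>snd H. c (f ` e) = i)"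
      using assms(1) bij_betw_imp_inj_on[OF b] by blast
  qed
  then show ?thesis by blast
qed

lemma berge_copy_from_extension_copy:
  fixes N p :: nat
  assumes G: "simple_graph V E" and "v \<in> V" and H: "H \<in> extensions V E v"
    and f: "inj_on f (fst H)" "f ` fst H \<subseteq> {..<N}" and "0 < p"
  obtains phi h where "inj_on phi V" "phi ` V \<subseteq> {..<N + p}" "inj_on h E"
    "\<forall>xy\<in>E. phi ` xy \<subseteq> h xy \<and> (\<exists>e\<in>snd H. h xy = f ` e \<union> {N..<N + p})"
proof -
  obtain g where g: "inj_on g E" "g ` E \<subseteq> snd H" "\<forall>xy\<in>E. Inl ` (xy - {v}) \<subseteq> g xy"
    by (rule extension_edge_map[OF G H])
  have edges_in_H: "e \<subseteq> fst H" if "e \<in> snd H" for e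
    using simple_graph_extension[OF G \<open>v \<in> V\<close> H] that unfolding simple_graph_def by blast
  have old_in_H: "Inl ` (V - {v}) \<subseteq> fst H"
    by (rule extensionsE[OF H]) auto
  define phi where "phi x = (if x = v then N else f (Inl x))" for x
  define h where "h xy = f ` g xy \<union> {N..<N + p}" for xy
  have f_old: "f (Inl x) < N" if "x \<in> V" "x \<noteq> v" for x
    using f(2) old_in_H that by blast
  have "inj_on phi V"
  proof (rule inj_onI)
    fix x y assume xy: "x \<in> V" "y \<in> V" "phi x = phi y"
    show "x = y"
    proof (cases "x = v \<or> y = v")
      case True
      with xy f_old[of x] f_old[of y] show ?thesis by (auto simp: phi_def split: if_splits)
    next
      case False
      with xy have "f (Inl x) = f (Inl y)" by (simp add: phi_def)
      with False xy(1,2) old_in_H f(1) show ?thesis by (auto dest: inj_onD)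
    qed
  qed
  moreover have "phi ` V \<subseteq> {..<N + p}"
    using f_old \<open>0 < p\<close> by (auto simp: phi_def intro: trans_less_add1)
  moreover have "inj_on h E"
  proof (rule inj_onI)
    fix x y assume xy: "x \<in> E" "y \<in> E" "h x = h y"
    have in_H: "g x \<subseteq> fst H" "g y \<subseteq> fst H" using g(2) xy(1,2) edges_in_H by auto
    then have "f ` g x \<in> Pow {..<N}" "f ` g y \<in> Pow {..<N}" using f(2) by auto
    with xy(3) have "f ` g x = f ` g y"
      unfolding h_def by (rule inj_onD[OF inj_on_Un_padding])
    with in_H f(1) have "g x = g y" by (simp add: inj_on_image_eq_iff)
    with g(1) xy(1,2) show "x = y" by (auto dest: inj_onD)
  qed
  moreover have "phi ` xy \<subseteq> h xy" if "xy \<in> E" for xy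
    using g(3) that \<open>0 < p\<close> by (force simp: phi_def h_def)
  moreover have "\<exists>e\<in>snd H. h xy = f ` e \<union> {N..<N + p}" if "xy \<in> E" for xy
    using g(2) that by (auto simp: h_def)
  ultimately show thesis by (intro that) blast+
qed

lemma berge_arrows_if_extensions_arrow:
  assumes G: "simple_graph V E" and "3 \<le> r"
    and arrows: "graph_arrows N k (\<Union>v\<in>V. extensions V E v)"
  shows "berge_arrows r (N + r - 2) k V E"
  unfolding berge_arrows_def
proof (intro allI impI)
  fix c :: "nat set \<Rightarrow> nat"
  assume c: "\<forall>e. e \<subseteq> {..<N + r - 2} \<and> card e = r \<longrightarrow> c e < k"
  define p where "p = r - 2"
  define T where "T = {N..<N + p}"
  have r: "N + r - 2 = N + p" "0 < p" "r = 2 + p" using \<open>3 \<le> r\<close> by (auto simp: p_def)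
  have pad: "e \<union> T \<subseteq> {..<N + r - 2} \<and> card (e \<union> T) = r"
    if "e \<subseteq> {..<N}" "card e = 2" for e
  proof -
    have "finite e" using that(2) by (intro card_ge_0_finite) simp
    then have "card (e \<union> T) = 2 + p"
      using card_Un_padding[OF that(1)] that(2) by (simp add: T_def)
    moreover have "e \<union> T \<subseteq> {..<N + p}" using that(1) by (auto simp: T_def)
    ultimately show ?thesis unfolding r(1) by (simp add: r(3))
  qed
  have colouring: "\<forall>e. e \<subseteq> {..<N} \<and> card e = 2 \<longrightarrow> c (e \<union> T) < k"
    using c pad by blast
  obtain H i f where H: "H \<in> (\<Union>v\<in>V. extensions V E v)"
    and f: "inj_on f (fst H)" "f ` fst H \<subseteq> {..<N}" and mono: "\<forall>e\<in>snd H. c (f ` e \<union> T) = i"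
    using arrows[unfolded graph_arrows_def, THEN spec[of _ "\<lambda>e. c (e \<union> T)"], THEN mp, OF colouring]
    by blast
  from H obtain v where v: "v \<in> V" "H \<in> extensions V E v" by blast
  obtain phi h where phi: "inj_on phi V" "phi ` V \<subseteq> {..<N + p}" and "inj_on h E"
    and covers: "\<forall>xy\<in>E. phi ` xy \<subseteq> h xy \<and> (\<exists>e\<in>snd H. h xy = f ` e \<union> T)"
    unfolding T_def by (rule berge_copy_from_extension_copy[OF G v f r(2)])
  have hyperedge: "h xy \<subseteq> {..<N + p} \<and> card (h xy) = r \<and> c (h xy) = i \<and> phi ` xy \<subseteq> h xy"
    if "xy \<in> E" for xy
  proof -
    from covers that obtain e where e: "e \<in> snd H" "h xy = f ` e \<union> T" by blast
    have "e \<subseteq> fst H" "card e = 2"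
      using simple_graph_extension[OF G v] e(1) unfolding simple_graph_def by auto
    with f have "f ` e \<subseteq> {..<N}" "card (f ` e) = 2" by (auto simp: card_image inj_on_subset)
    with pad[of "f ` e"] e mono have "h xy \<subseteq> {..<N + p} \<and> card (h xy) = r \<and> c (h xy) = i"
      unfolding r(1) by auto
    moreover from covers that have "phi ` xy \<subseteq> h xy" by blast
    ultimately show ?thesis by blast
  qed
  show "\<exists>i phi h. inj_on phi V \<and> phi ` V \<subseteq> {..<N + r - 2} \<and>
      inj_on h E \<and> (\<forall>xy\<in>E. h xy \<subseteq> {..<N + r - 2} \<and> card (h xy) = r \<and> c (h xy) = i \<and>
      phi ` xy \<subseteq> h xy)"
    unfolding r(1) using phi \<open>inj_on h E\<close> hyperedge
    by (intro exI[of _ i] exI[of _ phi] exI[of _ h] conjI ballI) simp_all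
qed

theorem corollary2:
  fixes V :: "'a set" and E :: "'a set set" and k r :: nat
  assumes "simple_graph V E" and "V \<noteq> {}" and "k \<ge> 2" and "r \<ge> 3"
  shows "berge_ramsey r k V E \<le> graph_ramsey k (\<Union>v\<in>V. extensions V E v) + r - 2"
proof -
  let ?Gs = "\<Union>v\<in>V. extensions V E v"
  obtain v where v: "v \<in> V" using assms(2) by blast
  then obtain H where H: "H \<in> extensions V E v"
    using extensions_nonempty[OF assms(1)] by blast
  then have "\<exists>N. graph_arrows N k ?Gs"
    using v simple_graph_extension[OF assms(1) v H] by (intro graph_arrows_exists) auto
  then have "graph_arrows (graph_ramsey k ?Gs) k ?Gs"
    unfolding graph_ramsey_def by (rule LeastI_ex)
  then have "berge_arrows r (graph_ramsey k ?Gs + r - 2) k V E"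
    by (rule berge_arrows_if_extensions_arrow[OF assms(1,4)])
  then show ?thesis
    unfolding berge_ramsey_def by (rule Least_le)
qed

end
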